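(* Let $J_1=\sigma_1/2$, $J_2=\sigma_2/2$ on $\mathbb{C}^2$, and let $\#(x,y)=(\#_{ij}(x,y))_{i,j=1,2}$ be a $2\times2$-matrix-valued tempered distribution on $\mathbb{R}^2$ (components in the standard basis, i.e. the eigenbasis of $\sigma_3$) such that, for every density operator $\rho$, the distribution $P_\rho(x,y)=\mathrm{Tr}[\#(x,y)\rho]$ has the correct marginals: $\int P_\rho(x,y)\,dy=\sum_{\alpha=\pm1/2}\mathrm{Tr}[E_{J_1}(\alpha)\rho]\,\delta(x-\alpha)$ and $\int P_\rho(x,y)\,dx=\sum_{\beta=\pm1/2}\mathrm{Tr}[E_{J_2}(\beta)\rho]\,\delta(y-\beta)$. Then the map $\rho\mapsto P_\rho$ is injective on density operators on $\mathbb{C}^2$ if and only if $\#_{11}\neq\#_{22}$ (as distributions).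
   Context: Pauli matrices: $\sigma_1=\begin{pmatrix}0&1\\1&0\end{pmatrix}$, $\sigma_2=\begin{pmatrix}0&-i\\i&0\end{pmatrix}$, $\sigma_3=\begin{pmatrix}1&0\\0&-1\end{pmatrix}$. $E_{A}(\alpha)$ denotes the orthogonal projection onto the eigenspace of the Hermitian operator $A$ with eigenvalue $\alpha$. A density operator is a positive semidefinite trace-one operator. *)

theory Defs
  imports "HOL-Analysis.Analysis"
begin

definition pd1 :: "(real \<Rightarrow> complex) \<Rightarrow> real \<Rightarrow> complex" where
  "pd1 f = (\<lambda>x. vector_derivative f (at x))"

definition smooth1 :: "(real \<Rightarrow> complex) \<Rightarrow> bool" where
  "smooth1 f \<longleftrightarrow> (\<forall>k x. ((pd1 ^^ k) f) differentiable (at x))"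

definition schwartz1 :: "(real \<Rightarrow> complex) \<Rightarrow> bool" where
  "schwartz1 f \<longleftrightarrow> smooth1 f \<and>
     (\<forall>m k. \<exists>C. \<forall>x. (1 + x\<^sup>2) ^ m * norm ((pd1 ^^ k) f x) \<le> C)"

definition pdx :: "(real \<times> real \<Rightarrow> complex) \<Rightarrow> real \<times> real \<Rightarrow> complex" where
  "pdx f = (\<lambda>(x, y). vector_derivative (\<lambda>t. f (t, y)) (at x))"

definition pdy :: "(real \<times> real \<Rightarrow> complex) \<Rightarrow> real \<times> real \<Rightarrow> complex" where
  "pdy f = (\<lambda>(x, y). vector_derivative (\<lambda>t. f (x, t)) (at y))"

text \<open>Iterated partial derivative; True = d/dx, False = d/dy.\<close>
fun pderivs :: "bool list \<Rightarrow> (real \<times> real \<Rightarrow> complex) \<Rightarrow> real \<times> real \<Rightarrow> complex" where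
  "pderivs [] f = f"
| "pderivs (b # bs) f = (if b then pdx else pdy) (pderivs bs f)"

definition smooth2 :: "(real \<times> real \<Rightarrow> complex) \<Rightarrow> bool" where
  "smooth2 f \<longleftrightarrow> (\<forall>ds. continuous_on UNIV (pderivs ds f) \<and>
     (\<forall>x y. (\<lambda>t. pderivs ds f (t, y)) differentiable (at x) \<and>
            (\<lambda>t. pderivs ds f (x, t)) differentiable (at y)))"

definition schwartz2 :: "(real \<times> real \<Rightarrow> complex) \<Rightarrow> bool" where
  "schwartz2 f \<longleftrightarrow> smooth2 f \<and>
     (\<forall>m ds. \<exists>C. \<forall>x y. (1 + x\<^sup>2 + y\<^sup>2) ^ m * norm (pderivs ds f (x, y)) \<le> C)"

definition seminorm2 :: "nat \<Rightarrow> bool list \<Rightarrow> (real \<times> real \<Rightarrow> complex) \<Rightarrow> real" where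
  "seminorm2 m ds f = (SUP z. (1 + (fst z)\<^sup>2 + (snd z)\<^sup>2) ^ m * norm (pderivs ds f z))"

text \<open>Values outside
  the Schwartz space are irrelevant.\<close>
definition tempered2 :: "((real \<times> real \<Rightarrow> complex) \<Rightarrow> complex) \<Rightarrow> bool" where
  "tempered2 T \<longleftrightarrow>
     (\<forall>f g. schwartz2 f \<longrightarrow> schwartz2 g \<longrightarrow> T (\<lambda>z. f z + g z) = T f + T g) \<and>
     (\<forall>c f. schwartz2 f \<longrightarrow> T (\<lambda>z. c * f z) = c * T f) \<and>
     (\<exists>C N. \<forall>f. schwartz2 f \<longrightarrow>
        norm (T f) \<le> C * (\<Sum>m\<le>N. \<Sum>ds\<in>{ds. length ds \<le> N}. seminorm2 m ds f))"

text \<open>\<open>\<integral> T dy = M\<close>: for all test functions phi(x) and all Schwartz cut-offs chi with chi 0 = 1,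
  T(phi(x) chi(eps y)) tends to M(phi) as eps tends to 0+.\<close>
definition has_x_marginal ::
  "((real \<times> real \<Rightarrow> complex) \<Rightarrow> complex) \<Rightarrow> ((real \<Rightarrow> complex) \<Rightarrow> complex) \<Rightarrow> bool" where
  "has_x_marginal T M \<longleftrightarrow> (\<forall>\<phi> \<psi>. schwartz1 \<phi> \<longrightarrow> schwartz1 \<psi> \<longrightarrow> \<psi> 0 = 1 \<longrightarrow>
     ((\<lambda>\<epsilon>. T (\<lambda>(x, y). \<phi> x * \<psi> (\<epsilon> * y))) \<longlongrightarrow> M \<phi>) (at_right 0))"

definition has_y_marginal ::
  "((real \<times> real \<Rightarrow> complex) \<Rightarrow> complex) \<Rightarrow> ((real \<Rightarrow> complex) \<Rightarrow> complex) \<Rightarrow> bool" where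
  "has_y_marginal T M \<longleftrightarrow> (\<forall>\<phi> \<psi>. schwartz1 \<phi> \<longrightarrow> schwartz1 \<psi> \<longrightarrow> \<psi> 0 = 1 \<longrightarrow>
     ((\<lambda>\<epsilon>. T (\<lambda>(x, y). \<psi> (\<epsilon> * x) * \<phi> y)) \<longlongrightarrow> M \<phi>) (at_right 0))"

definition sigma1 :: "complex^2^2" where
  "sigma1 = (\<chi> i j. if i = j then 0 else 1)"

definition sigma2 :: "complex^2^2" where
  "sigma2 = (\<chi> i j. if i = 1 \<and> j = 2 then - \<i> else if i = 2 \<and> j = 1 then \<i> else 0)"

definition sigma3 :: "complex^2^2" where
  "sigma3 = (\<chi> i j. if i = j then (if i = 1 then 1 else -1) else 0)"

definition J1 :: "complex^2^2" where "J1 = (\<chi> i j. sigma1 $ i $ j / 2)"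
definition J2 :: "complex^2^2" where "J2 = (\<chi> i j. sigma2 $ i $ j / 2)"

definition mat_adj :: "complex^'n^'n \<Rightarrow> complex^'n^'n" where
  "mat_adj A = (\<chi> i j. cnj (A $ j $ i))"

definition eigenproj :: "complex^'n^'n \<Rightarrow> complex \<Rightarrow> complex^'n^'n" where
  "eigenproj A \<alpha> = (THE P. P ** P = P \<and> mat_adj P = P \<and>
      range (\<lambda>v. P *v v) = {v. A *v v = \<alpha> *s v})"

definition density_op :: "complex^'n^'n \<Rightarrow> bool" where
  "density_op \<rho> \<longleftrightarrow> (\<forall>v. Im (\<Sum>i\<in>UNIV. cnj (v $ i) * (\<rho> *v v) $ i) = 0 \<and>
                          Re (\<Sum>i\<in>UNIV. cnj (v $ i) * (\<rho> *v v) $ i) \<ge> 0)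
                    \<and> trace \<rho> = 1"

text \<open>P_rho = Tr[# rho] as a distribution.\<close>
definition Pdist :: "(2 \<Rightarrow> 2 \<Rightarrow> (real \<times> real \<Rightarrow> complex) \<Rightarrow> complex) \<Rightarrow> complex^2^2
    \<Rightarrow> (real \<times> real \<Rightarrow> complex) \<Rightarrow> complex" where
  "Pdist S \<rho> = (\<lambda>f. \<Sum>i\<in>UNIV. \<Sum>j\<in>UNIV. S i j f * \<rho> $ j $ i)"

end

theory Submission
  imports Defs "HOL-Computational_Algebra.Polynomial"
begin

text \<open>
  In the eigenbasis of \<open>\<sigma>\<^sub>3\<close> the spin-\<open>x\<close> and spin-\<open>y\<close> marginals of \<open>P\<^sub>\<rho>\<close>
  only see \<open>\<rho>\<^sub>1\<^sub>2 + \<rho>\<^sub>2\<^sub>1\<close> and \<open>\<rho>\<^sub>1\<^sub>2 - \<rho>\<^sub>2\<^sub>1\<close>. Testing them against the odd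
  Schwartz function \<open>x exp (-x\<^sup>2)\<close>, which does not vanish at \<open>1/2\<close>, shows that \<open>P\<^sub>\<rho>\<close>
  determines both off-diagonal entries. As \<open>\<rho>\<^sub>2\<^sub>2 = 1 - \<rho>\<^sub>1\<^sub>1\<close>, the remaining unknown
  \<open>\<rho>\<^sub>1\<^sub>1\<close> enters \<open>P\<^sub>\<rho>\<close> only through \<open>\<rho>\<^sub>1\<^sub>1 (#\<^sub>1\<^sub>1 - #\<^sub>2\<^sub>2)\<close>; and if
  \<open>#\<^sub>1\<^sub>1 = #\<^sub>2\<^sub>2\<close>, the two eigenstates of \<open>\<sigma>\<^sub>3\<close> give the same \<open>P\<^sub>\<rho>\<close>.
\<close>

subsection \<open>Gaussian-type Schwartz functions\<close>

lemma power_div_fact_le_exp: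
  fixes x :: real
  assumes "x \<ge> 0"
  shows "x ^ n / fact n \<le> exp x"
proof -
  have exp_sums: "(\<lambda>n. x ^ n /\<^sub>R fact n) sums exp x" by (rule exp_converges)
  have "x ^ n / fact n = (\<Sum>k\<in>{n}. x ^ k /\<^sub>R fact k)" by (simp add: divide_simps)
  also have "\<dots> \<le> exp x"
    unfolding sums_unique[OF exp_sums]
    by (rule sum_le_suminf) (use exp_sums assms in \<open>auto simp: sums_summable\<close>)
  finally show ?thesis .
qed

lemma one_plus_square_power_mult_exp_bounded:
  fixes a :: real
  assumes "a > 0"
  shows "\<exists>C. \<forall>x::real. (1 + x\<^sup>2) ^ N * exp (- a * x\<^sup>2) \<le> C"
proof (intro exI allI)
  fix x :: real
  define t where "t = 1 + x\<^sup>2"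
  have "t \<ge> 0" by (simp add: t_def)
  have "a ^ N * t ^ N \<le> fact N * exp (a * t)"
    using power_div_fact_le_exp[of "a * t" N] assms \<open>t \<ge> 0\<close>
    by (simp add: divide_simps power_mult_distrib mult.commute)
  then have bound: "t ^ N * exp (- (a * t)) \<le> fact N / a ^ N"
    using assms by (simp add: field_simps exp_minus)
  have "(1 + x\<^sup>2) ^ N * exp (- a * x\<^sup>2) = exp a * (t ^ N * exp (- (a * t)))"
    by (simp add: t_def algebra_simps flip: exp_add)
  also have "\<dots> \<le> exp a * (fact N / a ^ N)"
    using bound by (rule mult_left_mono) simp
  finally show "(1 + x\<^sup>2) ^ N * exp (- a * x\<^sup>2) \<le> exp a * (fact N / a ^ N)" .
qed

lemma abs_power_le_one_plus_square_power:
  fixes x :: real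
  assumes "i \<le> n"
  shows "\<bar>x\<bar> ^ i \<le> (1 + x\<^sup>2) ^ n"
proof -
  have "\<bar>x\<bar> \<le> 1 + x\<^sup>2"
  proof (cases "\<bar>x\<bar> \<le> 1")
    case True
    then show ?thesis by (simp add: add_increasing2)
  next
    case False
    then have "\<bar>x\<bar> * 1 \<le> \<bar>x\<bar> * \<bar>x\<bar>" by (intro mult_left_mono) auto
    then show ?thesis by (simp add: power2_eq_square abs_mult_self_eq)
  qed
  then have "\<bar>x\<bar> ^ i \<le> (1 + x\<^sup>2) ^ i" by (simp add: power_mono)
  also have "\<dots> \<le> (1 + x\<^sup>2) ^ n" using assms by (simp add: power_increasing)
  finally show ?thesis .
qed

lemma abs_poly_le:
  fixes p :: "real poly"
  shows "\<bar>poly p x\<bar> \<le> (\<Sum>i\<le>degree p. \<bar>coeff p i\<bar>) * (1 + x\<^sup>2) ^ degree p"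
proof -
  have "\<bar>poly p x\<bar> \<le> (\<Sum>i\<le>degree p. \<bar>coeff p i * x ^ i\<bar>)"
    unfolding poly_altdef by (rule sum_abs)
  also have "\<dots> \<le> (\<Sum>i\<le>degree p. \<bar>coeff p i\<bar> * (1 + x\<^sup>2) ^ degree p)"
    by (rule sum_mono)
      (auto simp: abs_mult power_abs intro!: mult_left_mono abs_power_le_one_plus_square_power)
  finally show ?thesis by (simp add: sum_distrib_right)
qed

definition gauss_poly :: "real poly \<Rightarrow> real \<Rightarrow> real \<Rightarrow> complex" where
  "gauss_poly p a x = complex_of_real (poly p x * exp (- a * x\<^sup>2))"

definition gauss_poly_deriv :: "real \<Rightarrow> real poly \<Rightarrow> real poly" where
  "gauss_poly_deriv a p = pderiv p - smult (2 * a) ([:0, 1:] * p)"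

lemma gauss_poly_decay:
  assumes "a > 0"
  shows "\<exists>C. \<forall>x. (1 + x\<^sup>2) ^ m * norm (gauss_poly p a x) \<le> C"
proof -
  obtain C where C: "\<And>x. (1 + x\<^sup>2) ^ (m + degree p) * exp (- a * x\<^sup>2) \<le> C"
    using one_plus_square_power_mult_exp_bounded[OF assms] by blast
  define B where "B = (\<Sum>i\<le>degree p. \<bar>coeff p i\<bar>)"
  have "B \<ge> 0" by (simp add: B_def sum_nonneg)
  have "(1 + x\<^sup>2) ^ m * norm (gauss_poly p a x) \<le> B * C" for x
  proof -
    have "(1 + x\<^sup>2) ^ m * norm (gauss_poly p a x) = (1 + x\<^sup>2) ^ m * \<bar>poly p x\<bar> * exp (- a * x\<^sup>2)"
      by (simp add: gauss_poly_def abs_mult norm_mult del: of_real_mult)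
    also have "\<dots> \<le> (1 + x\<^sup>2) ^ m * (B * (1 + x\<^sup>2) ^ degree p) * exp (- a * x\<^sup>2)"
      using abs_poly_le[of p x] by (intro mult_right_mono mult_left_mono) (auto simp: B_def)
    also have "\<dots> = B * ((1 + x\<^sup>2) ^ (m + degree p) * exp (- a * x\<^sup>2))"
      by (simp add: power_add)
    also have "\<dots> \<le> B * C" using C \<open>B \<ge> 0\<close> by (simp add: mult_left_mono)
    finally show ?thesis .
  qed
  then show ?thesis by blast
qed

lemma gauss_poly_has_vector_derivative:
  "(gauss_poly p a has_vector_derivative gauss_poly (gauss_poly_deriv a p) a x) (at x)"
proof -
  have "((\<lambda>x. poly p x * exp (- a * x\<^sup>2)) has_real_derivative
        poly (pderiv p) x * exp (- a * x\<^sup>2) + poly p x * (exp (- a * x\<^sup>2) * (- a * (2 * x)))) (at x)"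
    by (auto intro!: derivative_eq_intros poly_DERIV)
  also have "poly (pderiv p) x * exp (- a * x\<^sup>2) + poly p x * (exp (- a * x\<^sup>2) * (- a * (2 * x)))
      = poly (gauss_poly_deriv a p) x * exp (- a * x\<^sup>2)"
    by (simp add: gauss_poly_deriv_def algebra_simps)
  finally show ?thesis
    unfolding gauss_poly_def[abs_def] by (rule has_vector_derivative_of_real)
qed

lemma funpow_pd1_gauss_poly: "(pd1 ^^ k) (gauss_poly p a) = gauss_poly ((gauss_poly_deriv a ^^ k) p) a"
proof -
  have "pd1 (gauss_poly q a) = gauss_poly (gauss_poly_deriv a q) a" for q
    unfolding pd1_def by (intro ext vector_derivative_at gauss_poly_has_vector_derivative)
  then show ?thesis by (induction k) simp_all
qed

lemma schwartz1_gauss_poly: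
  assumes "a > 0"
  shows "schwartz1 (gauss_poly p a)"
  unfolding schwartz1_def smooth1_def funpow_pd1_gauss_poly
  using differentiableI_vector[OF gauss_poly_has_vector_derivative] gauss_poly_decay[OF assms]
  by blast

lemma pderivs_gauss_poly_product:
  "\<exists>p' q'. pderivs ds (\<lambda>(x, y). gauss_poly p a x * gauss_poly q b y)
             = (\<lambda>(x, y). gauss_poly p' a x * gauss_poly q' b y)"
proof (induction ds)
  case Nil
  then show ?case by auto
next
  case (Cons d ds)
  then obtain p' q' where IH: "pderivs ds (\<lambda>(x, y). gauss_poly p a x * gauss_poly q b y)
      = (\<lambda>(x, y). gauss_poly p' a x * gauss_poly q' b y)"
    by blast
  have "pdx (\<lambda>(x, y). gauss_poly p' a x * gauss_poly q' b y)
      = (\<lambda>(x, y). gauss_poly (gauss_poly_deriv a p') a x * gauss_poly q' b y)"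
    by (auto simp: pdx_def intro!: vector_derivative_at
        has_vector_derivative_mult_left gauss_poly_has_vector_derivative)
  moreover have "pdy (\<lambda>(x, y). gauss_poly p' a x * gauss_poly q' b y)
      = (\<lambda>(x, y). gauss_poly p' a x * gauss_poly (gauss_poly_deriv b q') b y)"
    by (auto simp: pdy_def intro!: vector_derivative_at
        has_vector_derivative_mult_right gauss_poly_has_vector_derivative)
  ultimately show ?case using IH by auto
qed

lemma gauss_poly_product_decay:
  assumes "a > 0" "b > 0"
  shows "\<exists>C. \<forall>x y. (1 + x\<^sup>2 + y\<^sup>2) ^ m * norm (gauss_poly p a x * gauss_poly q b y) \<le> C"
proof -
  obtain C1 where C1: "\<And>x. (1 + x\<^sup>2) ^ m * norm (gauss_poly p a x) \<le> C1"
    using gauss_poly_decay[OF assms(1)] by blast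
  obtain C2 where C2: "\<And>y. (1 + y\<^sup>2) ^ m * norm (gauss_poly q b y) \<le> C2"
    using gauss_poly_decay[OF assms(2)] by blast
  have "(1 + x\<^sup>2 + y\<^sup>2) ^ m * norm (gauss_poly p a x * gauss_poly q b y) \<le> C1 * C2" for x y
  proof -
    have "1 + x\<^sup>2 + y\<^sup>2 \<le> (1 + x\<^sup>2) * (1 + y\<^sup>2)" by (simp add: algebra_simps)
    then have "(1 + x\<^sup>2 + y\<^sup>2) ^ m \<le> ((1 + x\<^sup>2) * (1 + y\<^sup>2)) ^ m"
      by (intro power_mono) auto
    then have "(1 + x\<^sup>2 + y\<^sup>2) ^ m * norm (gauss_poly p a x * gauss_poly q b y) \<le>
        ((1 + x\<^sup>2) ^ m * norm (gauss_poly p a x)) * ((1 + y\<^sup>2) ^ m * norm (gauss_poly q b y))"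
      by (simp add: norm_mult power_mult_distrib mult_ac mult_left_mono)
    also have "\<dots> \<le> C1 * C2"
      by (intro mult_mono C1 C2) (auto intro: order_trans[OF _ C1])
    finally show ?thesis .
  qed
  then show ?thesis by blast
qed

lemma schwartz2_gauss_poly_product:
  assumes "a > 0" "b > 0"
  shows "schwartz2 (\<lambda>(x, y). gauss_poly p a x * gauss_poly q b y)"
  unfolding schwartz2_def smooth2_def
proof (intro conjI allI)
  fix ds
  obtain p' q' where ds: "pderivs ds (\<lambda>(x, y). gauss_poly p a x * gauss_poly q b y)
      = (\<lambda>(x, y). gauss_poly p' a x * gauss_poly q' b y)"
    using pderivs_gauss_poly_product by blast
  have "continuous_on UNIV (\<lambda>z. gauss_poly p' a (fst z) * gauss_poly q' b (snd z))"
    unfolding gauss_poly_def by (intro continuous_intros)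
  then show "continuous_on UNIV (pderivs ds (\<lambda>(x, y). gauss_poly p a x * gauss_poly q b y))"
    unfolding ds by (simp add: case_prod_beta')
  fix x y
  show "(\<lambda>t. pderivs ds (\<lambda>(x, y). gauss_poly p a x * gauss_poly q b y) (t, y)) differentiable at x"
    "(\<lambda>t. pderivs ds (\<lambda>(x, y). gauss_poly p a x * gauss_poly q b y) (x, t)) differentiable at y"
    unfolding ds
    by (auto intro!: differentiableI_vector gauss_poly_has_vector_derivative
        has_vector_derivative_mult_left has_vector_derivative_mult_right)
next
  fix m ds
  obtain p' q' where ds: "pderivs ds (\<lambda>(x, y). gauss_poly p a x * gauss_poly q b y)
      = (\<lambda>(x, y). gauss_poly p' a x * gauss_poly q' b y)"
    using pderivs_gauss_poly_product by blast
  show "\<exists>C. \<forall>x y. (1 + x\<^sup>2 + y\<^sup>2) ^ m *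
      norm (pderivs ds (\<lambda>(x, y). gauss_poly p a x * gauss_poly q b y) (x, y)) \<le> C"
    unfolding ds using gauss_poly_product_decay[OF assms] by simp
qed

subsection \<open>Eigenprojections of the spin operators\<close>

lemma mat_adj_mult: "mat_adj (A ** B) = mat_adj B ** mat_adj A"
  by (simp add: mat_adj_def matrix_matrix_mult_def vec_eq_iff cnj_sum mult.commute)

lemma idempotent_mult_eq_if_range_subset:
  fixes X Y :: "'a::comm_ring_1^'n^'n"
  assumes "X ** X = X" "range ((*v) Y) \<subseteq> range ((*v) X)"
  shows "X ** Y = Y"
proof -
  have "(X ** Y) *v v = Y *v v" for v
  proof -
    obtain w where w: "Y *v v = X *v w" using assms(2) by blast
    have "(X ** Y) *v v = (X ** X) *v w" by (simp add: w flip: matrix_vector_mul_assoc)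
    then show ?thesis using assms(1) w by simp
  qed
  then show ?thesis by (simp add: matrix_eq)
qed

lemma eigenproj_eqI:
  fixes P :: "complex^'n^'n"
  assumes "P ** P = P" "mat_adj P = P"
    and "\<And>v. A *v (P *v v) = \<alpha> *s (P *v v)"
    and "\<And>v. A *v v = \<alpha> *s v \<Longrightarrow> P *v v = v"
  shows "eigenproj A \<alpha> = P"
proof -
  have range_P: "range ((*v) P) = {v. A *v v = \<alpha> *s v}"
  proof safe
    fix v
    assume "A *v v = \<alpha> *s v"
    then have "v = P *v v" using assms(4) by simp
    then show "v \<in> range ((*v) P)" by blast
  qed (use assms(3) in blast)
  show ?thesis
    unfolding eigenproj_def
  proof (rule the_equality)
    show "P ** P = P \<and> mat_adj P = P \<and> range ((*v) P) = {v. A *v v = \<alpha> *s v}"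
      using assms(1,2) range_P by blast
  next
    fix Q :: "complex^'n^'n"
    assume Q: "Q ** Q = Q \<and> mat_adj Q = Q \<and> range ((*v) Q) = {v. A *v v = \<alpha> *s v}"
    have "P ** Q = Q" "Q ** P = P"
      using idempotent_mult_eq_if_range_subset[of P Q] idempotent_mult_eq_if_range_subset[of Q P]
        assms(1) Q range_P by auto
    have "P = mat_adj (Q ** P)" using \<open>Q ** P = P\<close> assms(2) by simp
    also have "\<dots> = P ** Q" using assms(2) Q by (simp add: mat_adj_mult)
    finally show "Q = P" using \<open>P ** Q = Q\<close> by simp
  qed
qed

lemmas matrix_2_simps = vec_eq_iff forall_2 sum_2 matrix_matrix_mult_def matrix_vector_mult_def
  mat_adj_def J1_def J2_def sigma1_def sigma2_def

lemma eigenproj_J1_pos: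
  "eigenproj J1 (of_real (1/2)) = (\<chi> i j. 1/2)"
proof (rule eigenproj_eqI)
  fix v :: "complex^2"
  assume "J1 *v v = of_real (1/2) *s v"
  then have "(J1 *v v) $ 1 = (of_real (1/2) *s v) $ 1" by simp
  then have "v $ 2 = v $ 1" by (simp add: matrix_2_simps field_simps)
  then show "(\<chi> i j. 1/2) *v v = v"
    by (simp add: matrix_2_simps field_simps)
qed (simp_all add: matrix_2_simps algebra_simps)

lemma eigenproj_J1_neg:
  "eigenproj J1 (of_real (-1/2)) = (\<chi> i j. if i = j then 1/2 else -1/2)"
proof (rule eigenproj_eqI)
  fix v :: "complex^2"
  assume "J1 *v v = of_real (-1/2) *s v"
  then have "(J1 *v v) $ 1 = (of_real (-1/2) *s v) $ 1" by simp
  then have "v $ 2 = - v $ 1" by (simp add: matrix_2_simps field_simps)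
  then show "(\<chi> i j. if i = j then 1/2 else -1/2) *v v = v"
    by (simp add: matrix_2_simps field_simps)
qed (simp_all add: matrix_2_simps algebra_simps)

lemma eigenproj_J2_pos:
  "eigenproj J2 (of_real (1/2)) = (\<chi> i j. if i = j then 1/2 else if i = 1 then -\<i>/2 else \<i>/2)"
proof (rule eigenproj_eqI)
  fix v :: "complex^2"
  assume "J2 *v v = of_real (1/2) *s v"
  then have "(J2 *v v) $ 1 = (of_real (1/2) *s v) $ 1" by simp
  then have "v $ 1 = - \<i> * v $ 2" by (simp add: matrix_2_simps field_simps)
  then show "(\<chi> i j. if i = j then 1/2 else if i = 1 then -\<i>/2 else \<i>/2) *v v = v"
    by (simp add: matrix_2_simps field_simps)
qed (simp_all add: matrix_2_simps algebra_simps)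

lemma eigenproj_J2_neg:
  "eigenproj J2 (of_real (-1/2)) = (\<chi> i j. if i = j then 1/2 else if i = 1 then \<i>/2 else -\<i>/2)"
proof (rule eigenproj_eqI)
  fix v :: "complex^2"
  assume "J2 *v v = of_real (-1/2) *s v"
  then have "(J2 *v v) $ 1 = (of_real (-1/2) *s v) $ 1" by simp
  then have "v $ 1 = \<i> * v $ 2" by (simp add: matrix_2_simps field_simps)
  then show "(\<chi> i j. if i = j then 1/2 else if i = 1 then \<i>/2 else -\<i>/2) *v v = v"
    by (simp add: matrix_2_simps field_simps)
qed (simp_all add: matrix_2_simps algebra_simps)

lemma J1_marginal_odd:
  fixes \<rho> :: "complex^2^2"
  assumes "\<phi> (-1/2) = - \<phi> (1/2)"
  shows "(\<Sum>\<alpha>\<in>{1/2, -1/2::real}. trace (eigenproj J1 (of_real \<alpha>) ** \<rho>) * \<phi> \<alpha>)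
    = \<phi> (1/2) * (\<rho>$1$2 + \<rho>$2$1)"
proof -
  have "(\<Sum>\<alpha>\<in>{1/2, -1/2::real}. trace (eigenproj J1 (of_real \<alpha>) ** \<rho>) * \<phi> \<alpha>)
    = trace (eigenproj J1 (of_real (1/2)) ** \<rho>) * \<phi> (1/2)
      + trace (eigenproj J1 (of_real (-1/2)) ** \<rho>) * \<phi> (-1/2)"
    by (subst sum.insert) auto
  also have "\<dots> = \<phi> (1/2) * (\<rho>$1$2 + \<rho>$2$1)"
    unfolding eigenproj_J1_pos eigenproj_J1_neg using assms
    by (simp add: matrix_2_simps trace_def field_simps)
  finally show ?thesis .
qed

lemma J2_marginal_odd:
  fixes \<rho> :: "complex^2^2"
  assumes "\<phi> (-1/2) = - \<phi> (1/2)"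
  shows "(\<Sum>\<beta>\<in>{1/2, -1/2::real}. trace (eigenproj J2 (of_real \<beta>) ** \<rho>) * \<phi> \<beta>)
    = \<i> * \<phi> (1/2) * (\<rho>$1$2 - \<rho>$2$1)"
proof -
  have "(\<Sum>\<beta>\<in>{1/2, -1/2::real}. trace (eigenproj J2 (of_real \<beta>) ** \<rho>) * \<phi> \<beta>)
    = trace (eigenproj J2 (of_real (1/2)) ** \<rho>) * \<phi> (1/2)
      + trace (eigenproj J2 (of_real (-1/2)) ** \<rho>) * \<phi> (-1/2)"
    by (subst sum.insert) auto
  also have "\<dots> = \<i> * \<phi> (1/2) * (\<rho>$1$2 - \<rho>$2$1)"
    unfolding eigenproj_J2_pos eigenproj_J2_neg using assms
    by (simp add: matrix_2_simps trace_def field_simps)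
  finally show ?thesis .
qed

subsection \<open>Marginals and injectivity\<close>

lemma x_marginals_agree:
  assumes "has_x_marginal T M" "has_x_marginal T' M'"
    and "\<forall>f. schwartz2 f \<longrightarrow> T f = T' f"
    and "schwartz1 \<phi>" "schwartz1 \<psi>" "\<psi> 0 = 1"
    and "\<And>\<epsilon>. \<epsilon> > 0 \<Longrightarrow> schwartz2 (\<lambda>(x, y). \<phi> x * \<psi> (\<epsilon> * y))"
  shows "M \<phi> = M' \<phi>"
proof (rule tendsto_unique)
  let ?T = "\<lambda>T \<epsilon>. T (\<lambda>(x, y). \<phi> x * \<psi> (\<epsilon> * y))"
  show "(?T T \<longlongrightarrow> M \<phi>) (at_right 0)"
    using assms(1,4-6) unfolding has_x_marginal_def by blast
  have "\<forall>\<^sub>F \<epsilon> in at_right 0. ?T T' \<epsilon> = ?T T \<epsilon>"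
    using eventually_at_right_less[of 0] by eventually_elim (use assms(3,7) in auto)
  moreover have "(?T T' \<longlongrightarrow> M' \<phi>) (at_right 0)"
    using assms(2,4-6) unfolding has_x_marginal_def by blast
  ultimately show "(?T T \<longlongrightarrow> M' \<phi>) (at_right 0)"
    by (rule Lim_transform_eventually[rotated])
qed simp

lemma y_marginals_agree:
  assumes "has_y_marginal T M" "has_y_marginal T' M'"
    and "\<forall>f. schwartz2 f \<longrightarrow> T f = T' f"
    and "schwartz1 \<phi>" "schwartz1 \<psi>" "\<psi> 0 = 1"
    and "\<And>\<epsilon>. \<epsilon> > 0 \<Longrightarrow> schwartz2 (\<lambda>(x, y). \<psi> (\<epsilon> * x) * \<phi> y)"
  shows "M \<phi> = M' \<phi>"
proof (rule tendsto_unique)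
  let ?T = "\<lambda>T \<epsilon>. T (\<lambda>(x, y). \<psi> (\<epsilon> * x) * \<phi> y)"
  show "(?T T \<longlongrightarrow> M \<phi>) (at_right 0)"
    using assms(1,4-6) unfolding has_y_marginal_def by blast
  have "\<forall>\<^sub>F \<epsilon> in at_right 0. ?T T' \<epsilon> = ?T T \<epsilon>"
    using eventually_at_right_less[of 0] by eventually_elim (use assms(3,7) in auto)
  moreover have "(?T T' \<longlongrightarrow> M' \<phi>) (at_right 0)"
    using assms(2,4-6) unfolding has_y_marginal_def by blast
  ultimately show "(?T T \<longlongrightarrow> M' \<phi>) (at_right 0)"
    by (rule Lim_transform_eventually[rotated])
qed simp

lemma Pdist_2:
  "Pdist S \<rho> f = S 1 1 f * \<rho>$1$1 + S 1 2 f * \<rho>$2$1 + S 2 1 f * \<rho>$1$2 + S 2 2 f * \<rho>$2$2"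
  by (simp add: Pdist_def sum_2)

lemma density_op_basis_projector:
  "density_op (\<chi> i j. if i = k \<and> j = k then 1 else 0 :: complex^'n^'n)"
proof -
  let ?E = "\<chi> i j. if i = k \<and> j = k then 1 else 0 :: complex^'n^'n"
  have "?E *v v = (\<chi> i. if i = k then v $ k else 0)" for v
    by (simp add: matrix_vector_mult_def vec_eq_iff if_distrib[of "\<lambda>c. c * _"] cong: if_cong)
  then have "(\<Sum>i\<in>UNIV. cnj (v $ i) * (?E *v v) $ i) = cnj (v $ k) * v $ k" for v
    by (simp add: if_distrib[of "\<lambda>c. _ * c"] cong: if_cong)
  moreover have "cnj z * z = complex_of_real ((cmod z)\<^sup>2)" for z
    by (subst complex_norm_square) (rule mult.commute)
  moreover have "trace ?E = 1"
    by (simp add: trace_def)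
  ultimately show ?thesis
    by (simp add: density_op_def)
qed

lemma mat2_eqI:
  fixes \<rho> \<rho>' :: "complex^2^2"
  assumes "trace \<rho> = trace \<rho>'" "\<rho>$1$2 = \<rho>'$1$2" "\<rho>$2$1 = \<rho>'$2$1"
    and "c \<noteq> d" "c * \<rho>$1$1 + d * \<rho>$2$2 = c * \<rho>'$1$1 + d * \<rho>'$2$2"
  shows "\<rho> = \<rho>'"
proof -
  have "\<rho>$1$1 + \<rho>$2$2 = \<rho>'$1$1 + \<rho>'$2$2"
    using assms(1) by (simp add: trace_def sum_2)
  with assms(5) have "(c - d) * (\<rho>$1$1 - \<rho>'$1$1) = 0"
    by algebra
  with assms(4) have "\<rho>$1$1 = \<rho>'$1$1" by simp
  with assms(1-3) show ?thesis
    by (simp add: vec_eq_iff forall_2 trace_def sum_2)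
qed

lemma Pdist_determines_off_diagonal:
  fixes S :: "2 \<Rightarrow> 2 \<Rightarrow> (real \<times> real \<Rightarrow> complex) \<Rightarrow> complex" and \<rho> \<rho>' :: "complex^2^2"
  assumes "\<forall>\<rho>::complex^2^2. density_op \<rho> \<longrightarrow> has_x_marginal (Pdist S \<rho>)
           (\<lambda>\<phi>. \<Sum>\<alpha>\<in>{1/2, -1/2::real}. trace (eigenproj J1 (of_real \<alpha>) ** \<rho>) * \<phi> \<alpha>)"
    and "\<forall>\<rho>::complex^2^2. density_op \<rho> \<longrightarrow> has_y_marginal (Pdist S \<rho>)
           (\<lambda>\<phi>. \<Sum>\<beta>\<in>{1/2, -1/2::real}. trace (eigenproj J2 (of_real \<beta>) ** \<rho>) * \<phi> \<beta>)"
    and "density_op \<rho>" "density_op \<rho>'"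
    and "\<forall>f. schwartz2 f \<longrightarrow> Pdist S \<rho> f = Pdist S \<rho>' f"
  shows "\<rho>$1$2 = \<rho>'$1$2 \<and> \<rho>$2$1 = \<rho>'$2$1"
proof -
  note marginal_x = assms(1)[rule_format] and marginal_y = assms(2)[rule_format]
  define \<phi> where "\<phi> = gauss_poly [:0, 1:] 1"
  define \<psi> where "\<psi> = gauss_poly [:1:] 1"
  have "schwartz1 \<phi>" "schwartz1 \<psi>" "\<psi> 0 = 1"
    by (simp_all add: \<phi>_def \<psi>_def schwartz1_gauss_poly) (simp add: gauss_poly_def)
  have \<phi>_odd: "\<phi> (-1/2) = - \<phi> (1/2)" and "\<phi> (1/2) \<noteq> 0"
    by (simp_all add: \<phi>_def gauss_poly_def)
  have \<psi>_scaled: "\<psi> (\<epsilon> * t) = gauss_poly [:1:] (\<epsilon>\<^sup>2) t" for \<epsilon> t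
    by (simp add: \<psi>_def gauss_poly_def power_mult_distrib)
  have "schwartz2 (\<lambda>(x, y). \<phi> x * \<psi> (\<epsilon> * y))" "schwartz2 (\<lambda>(x, y). \<psi> (\<epsilon> * x) * \<phi> y)"
    if "\<epsilon> > 0" for \<epsilon>
    using that by (simp_all add: \<psi>_scaled \<phi>_def schwartz2_gauss_poly_product)
  then have "\<phi> (1/2) * (\<rho>$1$2 + \<rho>$2$1) = \<phi> (1/2) * (\<rho>'$1$2 + \<rho>'$2$1)"
    and "\<i> * \<phi> (1/2) * (\<rho>$1$2 - \<rho>$2$1) = \<i> * \<phi> (1/2) * (\<rho>'$1$2 - \<rho>'$2$1)"
    using x_marginals_agree[OF marginal_x[OF assms(3)] marginal_x[OF assms(4)] assms(5)]
      y_marginals_agree[OF marginal_y[OF assms(3)] marginal_y[OF assms(4)] assms(5)]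
      \<open>schwartz1 \<phi>\<close> \<open>schwartz1 \<psi>\<close> \<open>\<psi> 0 = 1\<close>
    unfolding J1_marginal_odd[OF \<phi>_odd, symmetric] J2_marginal_odd[OF \<phi>_odd, symmetric]
    by blast+
  then have sum: "\<rho>$1$2 + \<rho>$2$1 = \<rho>'$1$2 + \<rho>'$2$1"
    and diff: "\<rho>$1$2 - \<rho>$2$1 = \<rho>'$1$2 - \<rho>'$2$1"
    using \<open>\<phi> (1/2) \<noteq> 0\<close> by simp_all
  have "2 * \<rho>$1$2 = 2 * \<rho>'$1$2" "2 * \<rho>$2$1 = 2 * \<rho>'$2$1"
    using arg_cong2[OF sum diff, of "(+)"] arg_cong2[OF sum diff, of "(-)"]
    by (simp_all add: algebra_simps)
  then show ?thesis by simp
qed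

theorem lemma2:
  fixes S :: "2 \<Rightarrow> 2 \<Rightarrow> (real \<times> real \<Rightarrow> complex) \<Rightarrow> complex"
  assumes "\<forall>i j. tempered2 (S i j)"
    and "\<forall>\<rho>::complex^2^2. density_op \<rho> \<longrightarrow> has_x_marginal (Pdist S \<rho>)
           (\<lambda>\<phi>. \<Sum>\<alpha>\<in>{1/2, -1/2::real}. trace (eigenproj J1 (of_real \<alpha>) ** \<rho>) * \<phi> \<alpha>)"
    and "\<forall>\<rho>::complex^2^2. density_op \<rho> \<longrightarrow> has_y_marginal (Pdist S \<rho>)
           (\<lambda>\<phi>. \<Sum>\<beta>\<in>{1/2, -1/2::real}. trace (eigenproj J2 (of_real \<beta>) ** \<rho>) * \<phi> \<beta>)"
  shows "(\<forall>\<rho> \<rho>' :: complex^2^2. density_op \<rho> \<longrightarrow> density_op \<rho>' \<longrightarrow>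
            (\<forall>f. schwartz2 f \<longrightarrow> Pdist S \<rho> f = Pdist S \<rho>' f) \<longrightarrow> \<rho> = \<rho>')
         \<longleftrightarrow> (\<exists>f. schwartz2 f \<and> S 1 1 f \<noteq> S 2 2 f)"
proof
  assume inj: "\<forall>\<rho> \<rho>' :: complex^2^2. density_op \<rho> \<longrightarrow> density_op \<rho>' \<longrightarrow>
    (\<forall>f. schwartz2 f \<longrightarrow> Pdist S \<rho> f = Pdist S \<rho>' f) \<longrightarrow> \<rho> = \<rho>'"
  define E :: "2 \<Rightarrow> complex^2^2" where "E k = (\<chi> i j. if i = k \<and> j = k then 1 else 0)" for k
  have "E 1 \<noteq> E 2" by (simp add: E_def vec_eq_iff forall_2)
  then have "\<not> (\<forall>f. schwartz2 f \<longrightarrow> Pdist S (E 1) f = Pdist S (E 2) f)"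
    using inj density_op_basis_projector unfolding E_def by blast
  then show "\<exists>f. schwartz2 f \<and> S 1 1 f \<noteq> S 2 2 f"
    by (auto simp: Pdist_2 E_def)
next
  assume "\<exists>f. schwartz2 f \<and> S 1 1 f \<noteq> S 2 2 f"
  then obtain f where f: "schwartz2 f" "S 1 1 f \<noteq> S 2 2 f" by blast
  show "\<forall>\<rho> \<rho>' :: complex^2^2. density_op \<rho> \<longrightarrow> density_op \<rho>' \<longrightarrow>
    (\<forall>f. schwartz2 f \<longrightarrow> Pdist S \<rho> f = Pdist S \<rho>' f) \<longrightarrow> \<rho> = \<rho>'"
  proof (intro allI impI)
    fix \<rho> \<rho>' :: "complex^2^2"
    assume \<rho>: "density_op \<rho>" "density_op \<rho>'"
      and P: "\<forall>f. schwartz2 f \<longrightarrow> Pdist S \<rho> f = Pdist S \<rho>' f"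
    have off_diagonal: "\<rho>$1$2 = \<rho>'$1$2" "\<rho>$2$1 = \<rho>'$2$1"
      using Pdist_determines_off_diagonal[OF assms(2,3) \<rho> P] by blast+
    show "\<rho> = \<rho>'"
    proof (rule mat2_eqI[OF _ off_diagonal f(2)])
      show "trace \<rho> = trace \<rho>'" using \<rho> by (simp add: density_op_def)
      show "S 1 1 f * \<rho>$1$1 + S 2 2 f * \<rho>$2$2 = S 1 1 f * \<rho>'$1$1 + S 2 2 f * \<rho>'$2$2"
        using P f(1) off_diagonal by (auto simp: Pdist_2)
    qed
  qed
qed

end
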